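(* Let $\mathfrak{g}$ be a real filiform nilpotent Lie algebra of dimension $2n$, and let $e_1,\dots,e_{2n}$ be a basis such that for each $k=1,\dots,2n-2$ the term $\mathfrak{g}^k$ of the lower central series is spanned by $e_{2+k},\dots,e_{2n}$. Write $\hat k=2n+1-k$. If $[e_k,e_{\hat k}]\neq0$ for some $3\le k\le n$, then there is no positive filtration of $\mathfrak{g}$ with an adapted basis $f_1,\dots,f_{2n}$ whose weights $w_1,\dots,w_{2n}$ satisfy, with $\hat i=2n+1-i$: (F1) $0<w_1\le\dots\le w_{2n}$; (F2) $w_i+w_{\hat i}\ge w_{2n}$ and $w_i+w_{\hat i}>w_{2n-1}$ for all $i$; (F3) if $w_i+w_{\hat i}=w_{2n}$ and $w_i\neq w_{\hat i}$, then one of $w_i,w_{\hat i}$ has multiplicity at least two; (F4) if $w_i+w_{\hat i}=w_{2n}$ and $w_i=w_{\hat i}$, then either $i=\hat i$ or $w_i$ has multiplicity greater than two.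
   Context: Lower central series: $\mathfrak{g}^1=[\mathfrak{g},\mathfrak{g}]$, $\mathfrak{g}^{k+1}=[\mathfrak{g},\mathfrak{g}^k]$. A nilpotent Lie algebra of dimension $m$ is filiform if $\dim\mathfrak{g}^k=m-1-k$ for $1\le k\le m-2$. A positive filtration is a chain $\mathfrak{g}=L_1\supseteq L_2\supseteq\dots\supseteq L_N$ (not necessarily strict), with $L_k=0$ for $k>N$, such that $[L_i,L_j]\subseteq L_{i+j}$ for all positive integers $i,j$. The weight of a nonzero element is the largest $w$ with the element in $L_w$. An ordered basis is adapted if each $L_w$ is spanned by the last $\dim L_w$ basis elements; $w_i$ is the weight of the $i$-th basis element; the multiplicity of a value $\alpha$ is the number of $i$ with $w_i=\alpha$. *)

theory Defs
  imports Complex_Main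
begin

definition lie_algebra :: "('a::real_vector \<Rightarrow> 'a \<Rightarrow> 'a) \<Rightarrow> bool" where
  "lie_algebra br \<longleftrightarrow>
     (\<forall>x. linear (br x)) \<and> (\<forall>y. linear (\<lambda>x. br x y)) \<and>
     (\<forall>x. br x x = 0) \<and>
     (\<forall>x y z. br x (br y z) + br y (br z x) + br z (br x y) = 0)"

definition bracket_set :: "('a::real_vector \<Rightarrow> 'a \<Rightarrow> 'a) \<Rightarrow> 'a set \<Rightarrow> 'a set \<Rightarrow> 'a set" where
  "bracket_set br A B = span {br a b | a b. a \<in> A \<and> b \<in> B}"

fun lcs :: "('a::real_vector \<Rightarrow> 'a \<Rightarrow> 'a) \<Rightarrow> nat \<Rightarrow> 'a set" where
  "lcs br 0 = UNIV"
| "lcs br (Suc k) = bracket_set br UNIV (lcs br k)"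

definition nilpotent_lie :: "('a::real_vector \<Rightarrow> 'a \<Rightarrow> 'a) \<Rightarrow> bool" where
  "nilpotent_lie br \<longleftrightarrow> (\<exists>k. lcs br k = {0})"

definition filiform :: "('a::real_vector \<Rightarrow> 'a \<Rightarrow> 'a) \<Rightarrow> nat \<Rightarrow> bool" where
  "filiform br m \<longleftrightarrow> lie_algebra br \<and> nilpotent_lie br \<and> dim (UNIV::'a set) = m \<and>
     (\<forall>k. 1 \<le> k \<and> k \<le> m - 2 \<longrightarrow> dim (lcs br k) = m - 1 - k)"

definition ordered_basis :: "(nat \<Rightarrow> 'a::real_vector) \<Rightarrow> nat \<Rightarrow> bool" where
  "ordered_basis e m \<longleftrightarrow> inj_on e {1..m} \<and> independent (e ` {1..m}) \<and>
     span (e ` {1..m}) = UNIV"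

text \<open>Positive filtration L_1 \<supseteq> L_2 \<supseteq> ... (indices >= 1; L 0 is irrelevant),
  by subspaces, with L_1 = g, L_k = 0 for k > N, and [L_i, L_j] \<subseteq> L_(i+j).\<close>
definition positive_filtration :: "('a::real_vector \<Rightarrow> 'a \<Rightarrow> 'a) \<Rightarrow> (nat \<Rightarrow> 'a set) \<Rightarrow> bool" where
  "positive_filtration br L \<longleftrightarrow>
     (\<forall>k\<ge>1. subspace (L k)) \<and> L 1 = UNIV \<and> (\<forall>k\<ge>1. L (Suc k) \<subseteq> L k) \<and>
     (\<exists>N. \<forall>k>N. L k = {0}) \<and>
     (\<forall>i j x y. 1 \<le> i \<longrightarrow> 1 \<le> j \<longrightarrow> x \<in> L i \<longrightarrow> y \<in> L j \<longrightarrow> br x y \<in> L (i + j))"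

definition weight :: "(nat \<Rightarrow> 'a set) \<Rightarrow> 'a \<Rightarrow> nat" where
  "weight L x = (GREATEST w. 1 \<le> w \<and> x \<in> L w)"

definition adapted_basis :: "(nat \<Rightarrow> 'a::real_vector set) \<Rightarrow> (nat \<Rightarrow> 'a) \<Rightarrow> nat \<Rightarrow> bool" where
  "adapted_basis L f m \<longleftrightarrow> ordered_basis f m \<and>
     (\<forall>w\<ge>1. L w = span (f ` {m + 1 - dim (L w) .. m}))"

definition multiplicity_w :: "(nat \<Rightarrow> nat) \<Rightarrow> nat \<Rightarrow> nat \<Rightarrow> nat" where
  "multiplicity_w w m \<alpha> = card {i \<in> {1..m}. w i = \<alpha>}"

end

theory Submission
  imports Defs
begin

text \<open>Write \<open>w\<^sub>i\<close> for the weight of \<open>f\<^sub>i\<close>. By induction on \<open>k\<close>, the term \<open>\<g>\<^sup>k\<close>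
  of the lower central series lies in \<open>L (w\<^sub>k\<^sub>+\<^sub>1 + 1)\<close>, which is contained in
  \<open>span {f\<^sub>k\<^sub>+\<^sub>2, \<dots>, f\<^sub>2\<^sub>n}\<close> because \<open>f\<^sub>k\<^sub>+\<^sub>1\<close> is not in it. Both spaces have
  dimension \<open>2n - k - 1\<close>, so they coincide, and \<open>f\<^sub>k\<^sub>+\<^sub>2 \<in> L (w\<^sub>k\<^sub>+\<^sub>1 + 1)\<close> gives
  \<open>w\<^sub>k\<^sub>+\<^sub>1 < w\<^sub>k\<^sub>+\<^sub>2\<close>. Hence \<open>w\<^sub>2 < w\<^sub>3 < \<dots> < w\<^sub>2\<^sub>n\<close>, and every \<open>w\<^sub>j\<close> with
  \<open>j \<ge> 3\<close> has multiplicity one. As \<open>e\<^sub>j \<in> \<g>\<^sup>j\<^sup>-\<^sup>2 \<subseteq> L w\<^sub>j\<close>, the nonzero bracket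
  \<open>[e\<^sub>k, e\<^sub>l]\<close> with \<open>l = 2n + 1 - k\<close> lies in \<open>L (w\<^sub>k + w\<^sub>l)\<close>, forcing
  \<open>w\<^sub>k + w\<^sub>l \<le> w\<^sub>2\<^sub>n\<close>. By (F2) this is an equality between two distinct weights of
  multiplicity one, contradicting (F3).\<close>

lemma positive_filtration_subspace:
  "positive_filtration br L \<Longrightarrow> 1 \<le> c \<Longrightarrow> subspace (L c)"
  unfolding positive_filtration_def by blast

lemma positive_filtration_one: "positive_filtration br L \<Longrightarrow> L 1 = UNIV"
  unfolding positive_filtration_def by blast

lemma positive_filtration_bracket:
  "positive_filtration br L \<Longrightarrow> 1 \<le> i \<Longrightarrow> 1 \<le> j \<Longrightarrow> x \<in> L i \<Longrightarrow> y \<in> L j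
    \<Longrightarrow> br x y \<in> L (i + j)"
  unfolding positive_filtration_def by blast

lemma positive_filtration_antimono:
  assumes "positive_filtration br L" "1 \<le> c" "c \<le> d"
  shows "L d \<subseteq> L c"
  using assms(3)
proof (induction d rule: dec_induct)
  case (step d)
  have "L (Suc d) \<subseteq> L d"
    using assms(1,2) step(1) unfolding positive_filtration_def by auto
  with step.IH show ?case by blast
qed simp

lemma positive_filtration_bounded:
  assumes "positive_filtration br L" "x \<noteq> 0"
  obtains N where "\<And>c. x \<in> L c \<Longrightarrow> c \<le> N"
proof -
  obtain N where "\<forall>k>N. L k = {0}"
    using assms(1) unfolding positive_filtration_def by blast
  with assms(2) show thesis by (metis not_le singletonD that)
qed

lemma
  assumes "positive_filtration br L" "x \<noteq> 0"
  shows one_le_weight: "1 \<le> weight L x"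
    and mem_weight: "x \<in> L (weight L x)"
proof -
  obtain N where "\<And>c. x \<in> L c \<Longrightarrow> c \<le> N"
    using positive_filtration_bounded[OF assms] by blast
  moreover have "x \<in> L 1" using positive_filtration_one[OF assms(1)] by simp
  ultimately have "1 \<le> weight L x \<and> x \<in> L (weight L x)"
    unfolding weight_def by (intro GreatestI_nat[where P = "\<lambda>w. 1 \<le> w \<and> x \<in> L w"]) auto
  then show "1 \<le> weight L x" "x \<in> L (weight L x)" by auto
qed

lemma mem_filtration_iff_le_weight:
  assumes "positive_filtration br L" "x \<noteq> 0" "1 \<le> c"
  shows "x \<in> L c \<longleftrightarrow> c \<le> weight L x"
proof
  assume "x \<in> L c"
  moreover obtain N where "\<And>c. x \<in> L c \<Longrightarrow> c \<le> N"
    using positive_filtration_bounded[OF assms(1,2)] by blast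
  ultimately show "c \<le> weight L x"
    unfolding weight_def using assms(3)
    by (intro Greatest_le_nat[where P = "\<lambda>w. 1 \<le> w \<and> x \<in> L w"]) auto
next
  assume "c \<le> weight L x"
  then show "x \<in> L c"
    using mem_weight[OF assms(1,2)] positive_filtration_antimono[OF assms(1,3)] by blast
qed

lemma ordered_basis_nonzero:
  assumes "ordered_basis f m" "i \<in> {1..m}"
  shows "f i \<noteq> 0"
proof
  assume "f i = 0"
  with assms(2) have "0 \<in> f ` {1..m}" by force
  with assms(1) show False
    unfolding ordered_basis_def using real_vector.dependent_zero by blast
qed

lemma span_tail_eq_if_subset:
  assumes e: "ordered_basis e m" and f: "ordered_basis f m" and "1 \<le> i"
    and sub: "span (e ` {i..m}) \<subseteq> span (f ` {i..m})"
  shows "span (e ` {i..m}) = span (f ` {i..m})"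
proof -
  interpret fin: finite_dimensional_vector_space scaleR "e ` {1..m}"
    rewrites "module.span scaleR = span" and "module.dependent scaleR = dependent"
      and "vector_space.dim scaleR = dim"
    using e unfolding ordered_basis_def
    by unfold_locales (auto simp: span_raw_def dependent_raw_def dim_raw_def)
  have dim_tail: "dim (b ` {i..m}) = m + 1 - i" if "ordered_basis b m" for b :: "nat \<Rightarrow> 'a"
  proof -
    have sub: "{i..m} \<subseteq> {1..m}" using \<open>1 \<le> i\<close> by auto
    have "independent (b ` {i..m})"
      using that real_vector.independent_mono[OF _ image_mono[OF sub]]
      unfolding ordered_basis_def by blast
    moreover have "inj_on b {i..m}"
      using that inj_on_subset[OF _ sub] unfolding ordered_basis_def by blast
    ultimately show ?thesis by (simp add: real_vector.dim_eq_card_independent card_image)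
  qed
  have "span (e ` {i..m}) = span (span (f ` {i..m}))"
    using sub by (intro fin.dim_eq_span) (auto simp: dim_tail e f real_vector.span_base)
  then show ?thesis by simp
qed

lemma adapted_basis_subset_tail:
  assumes adapted: "adapted_basis L f m" and "1 \<le> c" "i \<le> m" "f i \<notin> L c"
  shows "L c \<subseteq> span (f ` {i+1..m})"
proof -
  have Lc: "L c = span (f ` {m + 1 - dim (L c) .. m})"
    using adapted \<open>1 \<le> c\<close> unfolding adapted_basis_def by blast
  have "\<not> m + 1 - dim (L c) \<le> i"
  proof
    assume "m + 1 - dim (L c) \<le> i"
    with \<open>i \<le> m\<close> have "f i \<in> L c" by (subst Lc) (auto intro: real_vector.span_base)
    with \<open>f i \<notin> L c\<close> show False by blast
  qed
  then have "{m + 1 - dim (L c) .. m} \<subseteq> {i+1..m}" by auto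
  then show ?thesis by (subst Lc) (intro real_vector.span_mono image_mono)
qed

lemma adapted_basis_last_mem:
  assumes "adapted_basis L f m" "1 \<le> c" "x \<in> L c" "x \<noteq> 0"
  shows "f m \<in> L c"
  using adapted_basis_subset_tail[OF assms(1,2), of m] assms(3,4) by auto

text \<open>If \<open>\<g> = \<real>u + L c\<close>, then \<open>[\<g>, \<g>] \<subseteq> L (c + 1)\<close>: the only bracket not obviously in
  \<open>L (c + 1)\<close> is \<open>[u, u] = 0\<close>.\<close>
lemma bracket_mem_if_codim_one:
  assumes lie: "lie_algebra br" and filt: "positive_filtration br L" and "1 \<le> c"
    and decomp: "\<And>x. \<exists>a. x - a *\<^sub>R u \<in> L c"
  shows "br x y \<in> L (c + 1)"
proof -
  obtain a b where x': "x - a *\<^sub>R u \<in> L c" and y': "y - b *\<^sub>R u \<in> L c"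
    using decomp by meson
  have lin_right: "linear (br z)" and lin_left: "linear (\<lambda>z. br z y)" and alt: "br z z = 0" for z y
    using lie unfolding lie_algebra_def by blast+
  have u: "u \<in> L 1" using positive_filtration_one[OF filt] by simp
  define x' y' where "x' = x - a *\<^sub>R u" and "y' = y - b *\<^sub>R u"
  have "br x y = br (a *\<^sub>R u + x') (b *\<^sub>R u + y')" by (simp add: x'_def y'_def)
  also have "\<dots> = (a * b) *\<^sub>R br u u + a *\<^sub>R br u y' + (b *\<^sub>R br x' u + br x' y')"
    using linear_add[OF lin_right] linear_add[OF lin_left]
      linear_scale[OF lin_right] linear_scale[OF lin_left]
    by (simp add: algebra_simps)
  also have "\<dots> = a *\<^sub>R br u y' + (b *\<^sub>R br x' u + br x' y')" by (simp add: alt)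
  finally have expand: "br x y = a *\<^sub>R br u y' + (b *\<^sub>R br x' u + br x' y')" .
  have "br u y' \<in> L (c + 1)"
    using positive_filtration_bracket[OF filt _ \<open>1 \<le> c\<close> u] y' by (simp add: y'_def add.commute)
  moreover have "br x' u \<in> L (c + 1)"
    using positive_filtration_bracket[OF filt \<open>1 \<le> c\<close> _ _ u] x' by (simp add: x'_def)
  moreover have "br x' y' \<in> L (c + 1)"
    using positive_filtration_bracket[OF filt \<open>1 \<le> c\<close> \<open>1 \<le> c\<close>] x' y'
      positive_filtration_antimono[OF filt, of "c + 1" "c + c"] \<open>1 \<le> c\<close>
    by (auto simp: x'_def y'_def)
  ultimately show ?thesis
    unfolding expand using positive_filtration_subspace[OF filt, of "c + 1"]
    by (simp add: real_vector.subspace_add real_vector.subspace_scale)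
qed

lemma bracket_set_subset_filtration:
  assumes filt: "positive_filtration br L" and "1 \<le> c" "A \<subseteq> L c"
  shows "bracket_set br UNIV A \<subseteq> L (c + 1)"
  unfolding bracket_set_def
proof (rule real_vector.span_minimal)
  show "subspace (L (c + 1))" by (rule positive_filtration_subspace[OF filt]) simp
  show "{br a b |a b. a \<in> UNIV \<and> b \<in> A} \<subseteq> L (c + 1)"
    using positive_filtration_bracket[OF filt order_refl \<open>1 \<le> c\<close>] \<open>A \<subseteq> L c\<close>
      positive_filtration_one[OF filt]
    by (auto simp: add.commute)
qed

locale adapted_lcs_filtration =
  fixes br :: "'a::real_vector \<Rightarrow> 'a \<Rightarrow> 'a" and L :: "nat \<Rightarrow> 'a set"
    and e f :: "nat \<Rightarrow> 'a" and m :: nat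
  assumes lie: "lie_algebra br"
    and filtration: "positive_filtration br L"
    and adapted: "adapted_basis L f m"
    and basis: "ordered_basis e m"
    and lcs_tail: "\<And>k. 1 \<le> k \<Longrightarrow> k + 2 \<le> m \<Longrightarrow> lcs br k = span (e ` {k+2..m})"
    and weight_mono: "\<And>i j. 1 \<le> i \<Longrightarrow> i \<le> j \<Longrightarrow> j \<le> m \<Longrightarrow> weight L (f i) \<le> weight L (f j)"
begin

abbreviation w :: "nat \<Rightarrow> nat" where "w i \<equiv> weight L (f i)"

lemma f_ordered_basis: "ordered_basis f m"
  using adapted unfolding adapted_basis_def by blast

lemma f_nonzero: "i \<in> {1..m} \<Longrightarrow> f i \<noteq> 0"
  using ordered_basis_nonzero[OF f_ordered_basis] .

lemma one_le_w: "i \<in> {1..m} \<Longrightarrow> 1 \<le> w i"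
  using one_le_weight[OF filtration f_nonzero] .

lemma f_mem_filtration_iff: "i \<in> {1..m} \<Longrightarrow> 1 \<le> c \<Longrightarrow> f i \<in> L c \<longleftrightarrow> c \<le> w i"
  using mem_filtration_iff_le_weight[OF filtration f_nonzero] .

lemma tail_subset_filtration:
  assumes "1 \<le> i" "i \<le> m"
  shows "span (f ` {i..m}) \<subseteq> L (w i)"
proof (rule real_vector.span_minimal)
  show "f ` {i..m} \<subseteq> L (w i)"
    using assms f_mem_filtration_iff one_le_w weight_mono by auto
  show "subspace (L (w i))"
    using assms by (intro positive_filtration_subspace[OF filtration] one_le_w) auto
qed

lemma filtration_subset_tail:
  assumes "1 \<le> i" "i \<le> m"
  shows "L (w i + 1) \<subseteq> span (f ` {i+1..m})"
  using assms by (intro adapted_basis_subset_tail[OF adapted]) (auto simp: f_mem_filtration_iff)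

lemma lcs_eq_tail_if_subset:
  assumes "1 \<le> k" "k + 2 \<le> m" and sub: "lcs br k \<subseteq> L (w (k+1) + 1)"
  shows "lcs br k = span (f ` {k+2..m}) \<and> w (k+1) < w (k+2)"
proof
  have "span (e ` {k+2..m}) \<subseteq> span (f ` {k+2..m})"
    using sub filtration_subset_tail[of "k + 1"] assms lcs_tail by auto
  then show lcs_eq: "lcs br k = span (f ` {k+2..m})"
    using span_tail_eq_if_subset[OF basis f_ordered_basis] lcs_tail assms by simp
  have "f (k+2) \<in> span (f ` {k+2..m})"
    using assms by (intro real_vector.span_base) auto
  with sub lcs_eq have "f (k+2) \<in> L (w (k+1) + 1)" by blast
  with assms show "w (k+1) < w (k+2)" by (simp add: f_mem_filtration_iff)
qed

lemma lcs_one_subset_filtration: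
  assumes "3 \<le> m"
  shows "lcs br 1 \<subseteq> L (w 2 + 1)"
proof -
  have decomp: "\<exists>a. x - a *\<^sub>R f 1 \<in> L (w 2)" for x
  proof -
    have "{1..m} = insert 1 {2..m}" using \<open>3 \<le> m\<close> by auto
    then have "x \<in> span (insert (f 1) (f ` {2..m}))"
      using f_ordered_basis unfolding ordered_basis_def by simp
    then obtain a where "x - a *\<^sub>R f 1 \<in> span (f ` {2..m})"
      unfolding real_vector.span_insert by blast
    then show ?thesis using tail_subset_filtration[of 2] \<open>3 \<le> m\<close> by auto
  qed
  have "lcs br 1 = span {br a b | a b. a \<in> UNIV \<and> b \<in> UNIV}"
    by (simp add: bracket_set_def)
  also have "\<dots> \<subseteq> L (w 2 + 1)"
    using bracket_mem_if_codim_one[OF lie filtration _ decomp] one_le_w[of 2] \<open>3 \<le> m\<close>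
      positive_filtration_subspace[OF filtration, of "w 2 + 1"]
    by (intro real_vector.span_minimal) auto
  finally show ?thesis .
qed

lemma lcs_eq_tail:
  assumes "1 \<le> k" "k + 2 \<le> m"
  shows "lcs br k = span (f ` {k+2..m}) \<and> w (k+1) < w (k+2)"
  using assms
proof (induction k rule: nat_induct_at_least)
  case base
  have "3 \<le> m" using base by simp
  then have "lcs br 1 \<subseteq> L (w (1 + 1) + 1)" by (simp only: one_add_one lcs_one_subset_filtration)
  then show ?case using lcs_eq_tail_if_subset[of 1] base by blast
next
  case (Suc k)
  then have "lcs br (Suc k) = bracket_set br UNIV (span (f ` {k+2..m}))" by simp
  also have "\<dots> \<subseteq> L (w (k+2) + 1)"
    using Suc.prems by (intro bracket_set_subset_filtration[OF filtration] one_le_w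
        tail_subset_filtration) auto
  finally show ?case using lcs_eq_tail_if_subset Suc.prems by simp
qed

lemma weight_strict_mono:
  assumes "2 \<le> i" "i < j" "j \<le> m"
  shows "w i < w j"
proof -
  have succ: "w l < w (Suc l)" if "2 \<le> l" "Suc l \<le> m" for l
  proof -
    obtain k where "l = Suc k" "1 \<le> k" using \<open>2 \<le> l\<close> by (cases l) auto
    then show ?thesis using lcs_eq_tail[of k] that by simp
  qed
  from \<open>i < j\<close> have "Suc i \<le> j" by simp
  then show ?thesis using \<open>j \<le> m\<close>
  proof (induction j rule: dec_induct)
    case base
    then show ?case using succ assms by simp
  next
    case (step j)
    then show ?case using succ[of j] assms by simp
  qed
qed

lemma multiplicity_weight_eq_one:
  assumes "3 \<le> j" "j \<le> m"
  shows "multiplicity_w (\<lambda>i. w i) m (w j) = 1"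
proof -
  have "i = j" if "i \<in> {1..m}" "w i = w j" for i
  proof (rule ccontr)
    assume "i \<noteq> j"
    have "w 1 < w j" using weight_mono[of 1 2] weight_strict_mono[of 2 j] assms by simp
    then show False
      using weight_strict_mono[of i j] weight_strict_mono[of j i] that assms \<open>i \<noteq> j\<close>
      by (cases "i = 1") (auto simp: nat_neq_iff)
  qed
  then have "{i \<in> {1..m}. w i = w j} = {j}" using assms by auto
  then show ?thesis unfolding multiplicity_w_def by simp
qed

lemma e_mem_weight:
  assumes "3 \<le> j" "j \<le> m"
  shows "e j \<in> L (w j)"
proof -
  have "e j \<in> span (e ` {j..m})" using assms by (intro real_vector.span_base) auto
  also have "span (e ` {j..m}) = span (f ` {j..m})"
  proof -
    obtain k where "j = k + 2" "1 \<le> k" using assms by (intro that[of "j - 2"]) auto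
    then show ?thesis using lcs_tail[of k] lcs_eq_tail[of k] assms by simp
  qed
  also have "\<dots> \<subseteq> L (w j)" using tail_subset_filtration assms by simp
  finally show ?thesis .
qed

lemma weight_sum_le_top:
  assumes "3 \<le> i" "i \<le> m" "3 \<le> j" "j \<le> m" "br (e i) (e j) \<noteq> 0"
  shows "w i + w j \<le> w m"
proof -
  have pos: "1 \<le> w i + w j" using one_le_w[of i] assms by simp
  have "br (e i) (e j) \<in> L (w i + w j)"
    using positive_filtration_bracket[OF filtration _ _ e_mem_weight e_mem_weight]
      one_le_w assms by simp
  then have "f m \<in> L (w i + w j)"
    using adapted_basis_last_mem[OF adapted pos] assms(5) by blast
  then show ?thesis using f_mem_filtration_iff pos assms by simp
qed

end

theorem lemma3p2:
  fixes br :: "'a::real_vector \<Rightarrow> 'a \<Rightarrow> 'a" and n :: nat and e :: "nat \<Rightarrow> 'a"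
  assumes fil: "filiform br (2*n)"
    and basis: "ordered_basis e (2*n)"
    and lcs_span: "\<forall>k. 1 \<le> k \<and> k \<le> 2*n - 2 \<longrightarrow> lcs br k = span (e ` {2+k..2*n})"
    and nonzero: "\<exists>k. 3 \<le> k \<and> k \<le> n \<and> br (e k) (e (2*n + 1 - k)) \<noteq> 0"
  shows "\<not> (\<exists>L f. positive_filtration br L \<and> adapted_basis L f (2*n) \<and>
           (let w = (\<lambda>i. weight L (f i)); m = 2*n; hat = (\<lambda>i. m + 1 - i) in
             \<comment> \<open>(F1)\<close>
             0 < w 1 \<and> (\<forall>i j. 1 \<le> i \<and> i \<le> j \<and> j \<le> m \<longrightarrow> w i \<le> w j) \<and>
             \<comment> \<open>(F2)\<close>
             (\<forall>i\<in>{1..m}. w i + w (hat i) \<ge> w m \<and> w i + w (hat i) > w (m - 1)) \<and>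
             \<comment> \<open>(F3)\<close>
             (\<forall>i\<in>{1..m}. w i + w (hat i) = w m \<and> w i \<noteq> w (hat i) \<longrightarrow>
                multiplicity_w w m (w i) \<ge> 2 \<or> multiplicity_w w m (w (hat i)) \<ge> 2) \<and>
             \<comment> \<open>(F4)\<close>
             (\<forall>i\<in>{1..m}. w i + w (hat i) = w m \<and> w i = w (hat i) \<longrightarrow>
                i = hat i \<or> multiplicity_w w m (w i) > 2)))"
proof (intro notI, elim exE, goal_cases)
  case (1 L f)
  then have filt: "positive_filtration br L" and adapted: "adapted_basis L f (2*n)"
    and F1: "\<forall>i j. 1 \<le> i \<and> i \<le> j \<and> j \<le> 2*n \<longrightarrow> weight L (f i) \<le> weight L (f j)"
    and F2: "\<forall>i\<in>{1..2*n}. weight L (f i) + weight L (f (2*n+1-i)) \<ge> weight L (f (2*n))"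
    and F3: "\<forall>i\<in>{1..2*n}. weight L (f i) + weight L (f (2*n+1-i)) = weight L (f (2*n)) \<and>
               weight L (f i) \<noteq> weight L (f (2*n+1-i)) \<longrightarrow>
                multiplicity_w (\<lambda>i. weight L (f i)) (2*n) (weight L (f i)) \<ge> 2 \<or>
                multiplicity_w (\<lambda>i. weight L (f i)) (2*n) (weight L (f (2*n+1-i))) \<ge> 2"
    unfolding Let_def by blast+
  interpret adapted_lcs_filtration br L e f "2*n"
    using fil basis lcs_span filt adapted F1 unfolding filiform_def
    by unfold_locales (auto simp: add.commute)
  obtain k where k: "3 \<le> k" "k \<le> n" "br (e k) (e (2*n + 1 - k)) \<noteq> 0"
    using nonzero by blast
  define k' where "k' = 2*n + 1 - k"
  have k': "3 \<le> k'" "k' \<le> 2*n" "k < k'" using k by (auto simp: k'_def)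
  have "w k + w k' \<le> w (2*n)" using weight_sum_le_top[of k k'] k k' by (simp add: k'_def)
  moreover have "w (2*n) \<le> w k + w k'" using F2 k by (simp add: k'_def)
  ultimately have "w k + w k' = w (2*n)" by simp
  moreover have "w k \<noteq> w k'" using weight_strict_mono[of k k'] k k' by simp
  ultimately have "2 \<le> multiplicity_w w (2*n) (w k) \<or> 2 \<le> multiplicity_w w (2*n) (w k')"
    using bspec[OF F3, of k] k by (simp add: k'_def)
  then show False
    using multiplicity_weight_eq_one[of k] multiplicity_weight_eq_one[of k'] k k' by simp
qed

end
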